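(* Consider the scheduler $\texttt{UNK}$ described in the context, run on a task arrival process $\mathcal{T}$ such that, at every time from time $0$ until $\texttt{UNK}$ completes its final task, $\texttt{UNK}$ has at least one alive task. Then the total measure of times in this period at which $\texttt{UNK}$ is unsaturated is at most half the length of the period (i.e., at most half of $\texttt{UNK}$'s awake time).
   Context: Serial-parallel scheduling problem: $p$ identical processors; a task arrival process is a finite set of tasks $\tau_i=(\sigma_i,\pi_i,t_i)$ with arrival time $t_i\ge 0$, serial work $\sigma_i$, parallel work $\pi_i$, $1\le\pi_i/\sigma_i\le p$. A task runs either as a serial job (work $\sigma_i$, at most one processor at a time) or as a parallel job (work $\pi_i$, any number of processors, rate equal to number of processors); the choice is irrevocable once the task is started; time is continuous and preemption is allowed. A task is alive from arrival until completion; awake time is the measure of times with an alive task. The scheduler $\texttt{UNK}$: whenever there are idle processors, $\texttt{UNK}$ takes any arrived but not-yet-started task $\tau_i$ and, if $\tau_i$ arrived more than $\sigma_i$ time ago, starts its serial job; otherwise it starts its parallel job. At each time $\texttt{UNK}$ allocates one processor to each of the (at most $p$) running serial jobs; at most one parallel job runs at a time, and it receives all processors not used by serial jobs. $\texttt{UNK}$ is saturated at a time if all $p$ processors are in use, and unsaturated otherwise. *)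

theory Defs
  imports "HOL-Analysis.Analysis"
begin

(* Tasks are indexed by a finite set I :: 'a set.  Task i has serial work sig i,
   parallel work par i and arrival time t i.  A run of UNK is described by the
   start time s i and the completion time c i of every task. *)

definition is_serial :: "('a \<Rightarrow> real) \<Rightarrow> ('a \<Rightarrow> real) \<Rightarrow> ('a \<Rightarrow> real) \<Rightarrow> 'a \<Rightarrow> bool" where
  "is_serial sig t s i \<longleftrightarrow> s i - t i > sig i"

text \<open>Number of running serial jobs at time x (each uses exactly one processor).\<close>
definition nser :: "'a set \<Rightarrow> ('a \<Rightarrow> real) \<Rightarrow> ('a \<Rightarrow> real) \<Rightarrow> ('a \<Rightarrow> real) \<Rightarrow> ('a \<Rightarrow> real)
    \<Rightarrow> real \<Rightarrow> nat" where
  "nser I sig t s c x = card {j \<in> I. is_serial sig t s j \<and> s j \<le> x \<and> x < c j}"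

definition par_active :: "'a set \<Rightarrow> ('a \<Rightarrow> real) \<Rightarrow> ('a \<Rightarrow> real) \<Rightarrow> ('a \<Rightarrow> real) \<Rightarrow> ('a \<Rightarrow> real)
    \<Rightarrow> real \<Rightarrow> bool" where
  "par_active I sig t s c x \<longleftrightarrow> (\<exists>j\<in>I. \<not> is_serial sig t s j \<and> s j \<le> x \<and> x < c j)"

text \<open>All p processors are in use: a running parallel job receives all processors
  not used by serial jobs.\<close>
definition saturated :: "nat \<Rightarrow> 'a set \<Rightarrow> ('a \<Rightarrow> real) \<Rightarrow> ('a \<Rightarrow> real) \<Rightarrow> ('a \<Rightarrow> real)
    \<Rightarrow> ('a \<Rightarrow> real) \<Rightarrow> real \<Rightarrow> bool" where
  "saturated p I sig t s c x \<longleftrightarrow> par_active I sig t s c x \<or> nser I sig t s c x = p"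

definition valid_tasks :: "nat \<Rightarrow> 'a set \<Rightarrow> ('a \<Rightarrow> real) \<Rightarrow> ('a \<Rightarrow> real) \<Rightarrow> ('a \<Rightarrow> real) \<Rightarrow> bool" where
  "valid_tasks p I sig par t \<longleftrightarrow> p \<ge> 1 \<and> finite I \<and>
     (\<forall>i\<in>I. t i \<ge> 0 \<and> sig i > 0 \<and> sig i \<le> par i \<and> par i \<le> real p * sig i)"

text \<open>(s, c) is a possible execution of UNK (for some choice of the nondeterministic
  task selections).\<close>
definition UNK_run :: "nat \<Rightarrow> 'a set \<Rightarrow> ('a \<Rightarrow> real) \<Rightarrow> ('a \<Rightarrow> real) \<Rightarrow> ('a \<Rightarrow> real)
    \<Rightarrow> ('a \<Rightarrow> real) \<Rightarrow> ('a \<Rightarrow> real) \<Rightarrow> bool" where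
  "UNK_run p I sig par t s c \<longleftrightarrow>
     \<comment> \<open>tasks start only after arrival\<close>
     (\<forall>i\<in>I. t i \<le> s i) \<and>
     \<comment> \<open>a serial job runs on one processor from its start until completion\<close>
     (\<forall>i\<in>I. is_serial sig t s i \<longrightarrow> c i = s i + sig i) \<and>
     \<comment> \<open>a parallel job gets all processors not used by serial jobs; c i is the
         first time its parallel work par i is done\<close>
     (\<forall>i\<in>I. \<not> is_serial sig t s i \<longrightarrow>
        s i < c i \<and>
        integral {s i..c i} (\<lambda>x. real p - real (nser I sig t s c x)) = par i \<and>
        (\<forall>y. s i \<le> y \<and> y < c i \<longrightarrow>
           integral {s i..y} (\<lambda>x. real p - real (nser I sig t s c x)) < par i)) \<and>
     \<comment> \<open>at most p serial jobs run at a time\<close>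
     (\<forall>x. nser I sig t s c x \<le> p) \<and>
     \<comment> \<open>no task is started while a parallel job runs (no idle processors then)\<close>
     (\<forall>i\<in>I. \<forall>j\<in>I. j \<noteq> i \<and> \<not> is_serial sig t s j \<longrightarrow> \<not> (s j < s i \<and> s i < c j)) \<and>
     (\<forall>i\<in>I. \<forall>j\<in>I. j \<noteq> i \<and> \<not> is_serial sig t s i \<and> \<not> is_serial sig t s j \<longrightarrow> s i \<noteq> s j) \<and>
     \<comment> \<open>a parallel job is started only if some processor is idle\<close>
     (\<forall>i\<in>I. \<not> is_serial sig t s i \<longrightarrow> nser I sig t s c (s i) < p) \<and>
     \<comment> \<open>greedy: whenever an arrived task is still unstarted, no processor is idle\<close>
     (\<forall>x. (\<exists>i\<in>I. t i \<le> x \<and> x < s i) \<longrightarrow> saturated p I sig t s c x)"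

definition alive :: "('a \<Rightarrow> real) \<Rightarrow> ('a \<Rightarrow> real) \<Rightarrow> 'a \<Rightarrow> real \<Rightarrow> bool" where
  "alive t c i x \<longleftrightarrow> t i \<le> x \<and> x < c i"

definition run_period :: "'a set \<Rightarrow> ('a \<Rightarrow> real) \<Rightarrow> real set" where
  "run_period I c = {x. 0 \<le> x \<and> (\<exists>j\<in>I. x < c j)}"

end

theory Submission
  imports Defs
begin

text \<open>An unsaturated time is covered by a running serial job: an arrived but unstarted task
  or a running parallel job would saturate the greedy scheduler. A serial job started at s
  runs for sig and was waiting for more than sig before s, so the interval [s - sig, s) is
  saturated. Charging the unsaturated part of the covering interval of the serial job that
  finishes last to its saturated waiting interval, and recursing on the time before that
  waiting interval, shows that the unsaturated measure is at most the saturated measure,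
  hence at most half of the period.\<close>

lemma fmeasurable_lborel_Ico [simp]: "{a..<b::real} \<in> fmeasurable lborel"
  by (rule fmeasurableI2[OF fmeasurable_cbox[of a b]]) auto

lemma measure_lessThan_split:
  fixes A :: "real set"
  assumes "A \<in> fmeasurable lborel" and "b \<le> T"
  shows "measure lborel (A \<inter> {..<T}) = measure lborel (A \<inter> {..<b}) + measure lborel (A \<inter> {b..<T})"
proof -
  have "A \<inter> {..<T} = (A \<inter> {..<b}) \<union> (A \<inter> {b..<T})" and "A \<inter> {b..<T} - A \<inter> {..<b} = A \<inter> {b..<T}"
    using assms(2) by auto
  then show ?thesis
    using assms(1) by (simp add: measure_Un2 fmeasurable_Int_fmeasurable)
qed

lemma measure_lessThan_le_by_preceding_intervals:
  fixes U Q :: "real set" and s c d :: "'a \<Rightarrow> real"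
  assumes "finite S"
    and U: "U \<in> fmeasurable lborel" and Q: "Q \<in> fmeasurable lborel" and "U \<inter> Q = {}"
    and cover: "\<And>x. x \<in> U \<Longrightarrow> \<exists>k\<in>S. s k \<le> x \<and> x < c k"
    and preceding: "\<And>k. k \<in> S \<Longrightarrow> {s k - d k..<s k} \<subseteq> Q"
    and nonneg: "\<And>k. k \<in> S \<Longrightarrow> 0 \<le> d k"
    and short: "\<And>k. k \<in> S \<Longrightarrow> c k \<le> s k + d k"
  shows "measure lborel (U \<inter> {..<T}) \<le> measure lborel (Q \<inter> {..<T})"
proof (induction "card {k\<in>S. s k < T}" arbitrary: T rule: less_induct)
  case less
  define ST where "ST = {k\<in>S. s k < T}"
  have "finite ST"
    using \<open>finite S\<close> by (simp add: ST_def)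
  show ?case
  proof (cases "ST = {}")
    case True
    then have "U \<inter> {..<T} = {}"
      using cover by (fastforce simp: ST_def)
    then show ?thesis by simp
  next
    case False
    then have "Max (c ` ST) \<in> c ` ST"
      using \<open>finite ST\<close> by simp
    then obtain j where "j \<in> ST" and "c j = Max (c ` ST)"
      by auto
    then have j: "j \<in> S" "s j < T" and last: "\<And>k. k \<in> ST \<Longrightarrow> c k \<le> c j"
      using \<open>finite ST\<close> by (auto simp: ST_def)
    txt \<open>Every interval covering a time in [a, T) ends no later than that of j, so U meets
      [a, T) only inside [s j, c j), which is no longer than the part [a, s j) of Q.\<close>
    define a where "a = s j - d j"
    have "a \<le> s j"
      using nonneg[OF \<open>j \<in> S\<close>] by (simp add: a_def)
    have "{k\<in>S. s k < a} \<subset> ST"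
    proof
      show "{k\<in>S. s k < a} \<subseteq> ST"
        using \<open>a \<le> s j\<close> \<open>s j < T\<close> by (auto simp: ST_def)
      show "{k\<in>S. s k < a} \<noteq> ST"
        using \<open>j \<in> ST\<close> \<open>a \<le> s j\<close> by auto
    qed
    then have "card {k\<in>S. s k < a} < card {k\<in>S. s k < T}"
      using \<open>finite ST\<close> psubset_card_mono unfolding ST_def by blast
    then have before_a: "measure lborel (U \<inter> {..<a}) \<le> measure lborel (Q \<inter> {..<a})"
      by (rule less.hyps)
    have "U \<inter> {a..<T} \<subseteq> {s j..<min (c j) T}"
    proof
      fix x assume x: "x \<in> U \<inter> {a..<T}"
      then obtain k where "k \<in> S" "s k \<le> x" "x < c k"
        using cover by blast
      then have "x < c j"
        using last[of k] x by (force simp: ST_def)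
      moreover have "s j \<le> x"
        using x preceding[OF \<open>j \<in> S\<close>] \<open>U \<inter> Q = {}\<close> by (force simp: a_def)
      ultimately show "x \<in> {s j..<min (c j) T}"
        using x by simp
    qed
    then have "measure lborel (U \<inter> {a..<T}) \<le> measure lborel {s j..<min (c j) T}"
      using U by (intro measure_mono_fmeasurable) auto
    also have "\<dots> \<le> s j - a"
      using short[OF \<open>j \<in> S\<close>] \<open>a \<le> s j\<close> by (cases "s j \<le> min (c j) T") (auto simp: a_def)
    also have "\<dots> = measure lborel {a..<s j}"
      using \<open>a \<le> s j\<close> by simp
    also have "\<dots> \<le> measure lborel (Q \<inter> {a..<T})"
      using preceding[OF \<open>j \<in> S\<close>] \<open>s j < T\<close> Q
      by (intro measure_mono_fmeasurable) (auto simp: a_def fmeasurable_Int_fmeasurable)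
    finally have after_a: "measure lborel (U \<inter> {a..<T}) \<le> measure lborel (Q \<inter> {a..<T})" .
    have "a \<le> T"
      using \<open>a \<le> s j\<close> \<open>s j < T\<close> by simp
    then show ?thesis
      using before_a after_a U Q by (simp add: measure_lessThan_split)
  qed
qed

lemma measure_le_by_preceding_intervals:
  fixes U Q :: "real set" and s c d :: "'a \<Rightarrow> real"
  assumes "finite S"
    and "U \<in> fmeasurable lborel" and Q: "Q \<in> fmeasurable lborel" and "U \<inter> Q = {}"
    and cover: "\<And>x. x \<in> U \<Longrightarrow> \<exists>k\<in>S. s k \<le> x \<and> x < c k"
    and "\<And>k. k \<in> S \<Longrightarrow> {s k - d k..<s k} \<subseteq> Q"
    and "\<And>k. k \<in> S \<Longrightarrow> 0 \<le> d k"
    and "\<And>k. k \<in> S \<Longrightarrow> c k \<le> s k + d k"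
  shows "measure lborel U \<le> measure lborel Q"
proof -
  obtain T where T: "\<And>k. k \<in> S \<Longrightarrow> c k \<le> T"
    using bdd_above_finite[OF finite_imageI[OF \<open>finite S\<close>, of c]] by (auto simp: bdd_above_def)
  have "U \<inter> {..<T} = U"
    using cover T by force
  then have "measure lborel U \<le> measure lborel (Q \<inter> {..<T})"
    using measure_lessThan_le_by_preceding_intervals[OF assms] by metis
  also have "\<dots> \<le> measure lborel Q"
    using Q by (intro measure_mono_fmeasurable) auto
  finally show ?thesis .
qed

lemma measure_le_half_if_le_complement:
  assumes "P \<in> fmeasurable M" and "U \<in> sets M" and "U \<subseteq> P"
    and "measure M U \<le> measure M (P - U)"
  shows "measure M U \<le> measure M P / 2"
  using assms by (simp add: measurable_measure_Diff)

lemma run_period_fmeasurable: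
  assumes "finite I"
  shows "run_period I c \<in> fmeasurable lborel"
proof -
  have "run_period I c = (\<Union>j\<in>I. {0..<c j})"
    by (auto simp: run_period_def)
  then show ?thesis
    using assms by (simp add: fmeasurable.finite_UN)
qed

lemma UNK_run_greedy:
  assumes "UNK_run p I sig par t s c" and "i \<in> I" and "t i \<le> x" and "x < s i"
  shows "saturated p I sig t s c x"
proof -
  have "\<forall>x. (\<exists>i\<in>I. t i \<le> x \<and> x < s i) \<longrightarrow> saturated p I sig t s c x"
    using assms(1) unfolding UNK_run_def by (elim conjE)
  then show ?thesis
    using assms(2-4) by blast
qed

lemma UNK_run_serial_completion:
  assumes "UNK_run p I sig par t s c" and "i \<in> I" and "is_serial sig t s i"
  shows "c i = s i + sig i"
  using assms unfolding UNK_run_def by simp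

lemma UNK_unsaturated_imp_serial_running:
  assumes "UNK_run p I sig par t s c" and "i \<in> I" and "alive t c i x"
    and "\<not> saturated p I sig t s c x"
  shows "is_serial sig t s i \<and> s i \<le> x"
proof
  show "s i \<le> x"
    using UNK_run_greedy[OF assms(1,2)] assms(3,4) unfolding alive_def by force
  then show "is_serial sig t s i"
    using assms(2-4) unfolding alive_def saturated_def par_active_def by blast
qed

lemma UNK_saturated_while_serial_waits:
  assumes "valid_tasks p I sig par t" and "UNK_run p I sig par t s c"
    and "k \<in> I" and "is_serial sig t s k"
  shows "{s k - sig k..<s k} \<subseteq> {x \<in> run_period I c. saturated p I sig t s c x}"
proof
  fix x assume x: "x \<in> {s k - sig k..<s k}"
  have "0 \<le> t k" "0 < sig k" "t k < s k - sig k"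
    using assms(1,3,4) by (auto simp: valid_tasks_def is_serial_def)
  moreover have "c k = s k + sig k"
    using assms(2-4) by (rule UNK_run_serial_completion)
  ultimately have "x \<in> run_period I c" and "t k \<le> x"
    using x \<open>k \<in> I\<close> unfolding run_period_def by (auto intro!: bexI[of _ k])
  then show "x \<in> {x \<in> run_period I c. saturated p I sig t s c x}"
    using UNK_run_greedy[OF assms(2,3)] x by simp
qed

lemma UNK_unsaturated_measure_le_saturated:
  assumes "valid_tasks p I sig par t" and "UNK_run p I sig par t s c"
    and "\<forall>x\<in>run_period I c. \<exists>i\<in>I. alive t c i x"
    and U_sets: "{x \<in> run_period I c. \<not> saturated p I sig t s c x} \<in> sets lborel"
  shows "measure lborel {x \<in> run_period I c. \<not> saturated p I sig t s c x}
           \<le> measure lborel {x \<in> run_period I c. saturated p I sig t s c x}"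
    (is "measure lborel ?U \<le> measure lborel ?Q")
proof (rule measure_le_by_preceding_intervals[where S = "{k \<in> I. is_serial sig t s k}" and d = sig])
  have "finite I"
    using assms(1) by (simp add: valid_tasks_def)
  then show "finite {k \<in> I. is_serial sig t s k}"
    by simp
  have P: "run_period I c \<in> fmeasurable lborel"
    using \<open>finite I\<close> by (rule run_period_fmeasurable)
  show "?U \<in> fmeasurable lborel"
    using fmeasurableI2[OF P _ U_sets] by auto
  have "?Q = run_period I c - ?U"
    by auto
  then show "?Q \<in> fmeasurable lborel"
    using fmeasurable_Diff[OF P U_sets] by simp
  show "?U \<inter> ?Q = {}"
    by auto
  show "\<exists>k\<in>{k \<in> I. is_serial sig t s k}. s k \<le> x \<and> x < c k" if x: "x \<in> ?U" for x
  proof -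
    obtain i where "i \<in> I" "alive t c i x"
      using x assms(3) by auto
    with x show ?thesis
      using UNK_unsaturated_imp_serial_running[OF assms(2)] by (auto simp: alive_def)
  qed
  show "{s k - sig k..<s k} \<subseteq> ?Q" if "k \<in> {k \<in> I. is_serial sig t s k}" for k
    using that UNK_saturated_while_serial_waits[OF assms(1,2)] by simp
  show "0 \<le> sig k" if "k \<in> {k \<in> I. is_serial sig t s k}" for k
    using that assms(1) by (auto simp: valid_tasks_def)
  show "c k \<le> s k + sig k" if "k \<in> {k \<in> I. is_serial sig t s k}" for k
    using that UNK_run_serial_completion[OF assms(2)] by simp
qed

theorem lemma5p2:
  assumes "valid_tasks p I sig par t"
    and "UNK_run p I sig par t s c"
    and "\<forall>x\<in>run_period I c. \<exists>i\<in>I. alive t c i x"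
  shows "measure lborel {x \<in> run_period I c. \<not> saturated p I sig t s c x}
           \<le> measure lborel (run_period I c) / 2"
proof (cases "{x \<in> run_period I c. \<not> saturated p I sig t s c x} \<in> sets lborel")
  case True
  have "finite I"
    using assms(1) by (simp add: valid_tasks_def)
  then have "run_period I c \<in> fmeasurable lborel"
    by (rule run_period_fmeasurable)
  moreover have "run_period I c - {x \<in> run_period I c. \<not> saturated p I sig t s c x}
      = {x \<in> run_period I c. saturated p I sig t s c x}"
    by auto
  ultimately show ?thesis
    using measure_le_half_if_le_complement[OF _ True] UNK_unsaturated_measure_le_saturated[OF assms True]
    by auto
qed (simp add: measure_notin_sets)

end
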